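(* Let $L$ be an invertible linear map on $\mathcal{S}^n$ such that $L(CP_n)\subseteq CP_n$. If $L$ is a standard map, then $L=\mathcal{L}_{A,B}$ for suitable entrywise nonnegative matrices $A,B\in M_n(\mathbb{R})$. Conversely, for $n\le 4$, if $L=\mathcal{L}_{A,B}$ with $B$ invertible, then $L$ is a standard map.
   Context: $\mathcal{S}^n$ denotes the space of real symmetric $n\times n$ matrices. $CP_n=\{BB^t: B \text{ a real entrywise nonnegative } n\times k \text{ matrix for some } k\}$ is the cone of completely positive matrices. A standard map on $\mathcal{S}^n$ is a map of the form $X\mapsto RXR^t$ for a fixed $R\in M_n(\mathbb{R})$. For $A,B\in M_n(\mathbb{R})$, the generalized Lyapunov map is $\mathcal{L}_{A,B}(X)=AXB+B^tXA^t$ on $\mathcal{S}^n$. *)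

theory Defs
  imports "HOL-Analysis.Analysis"
begin

definition sym_mats :: "(real^'n^'n) set" where
  "sym_mats = {X. transpose X = X}"

text \<open>CP_n = {B B^t : B entrywise nonnegative n x k for some k}; B is given by its
  entries B i l for l < k.\<close>
definition cp_cone :: "(real^'n^'n) set" where
  "cp_cone = {X. \<exists>(k::nat) (B::'n \<Rightarrow> nat \<Rightarrow> real).
       (\<forall>i l. 0 \<le> B i l) \<and> (\<forall>i j. X $ i $ j = (\<Sum>l<k. B i l * B j l))}"

definition nonneg_mat :: "real^'n^'n \<Rightarrow> bool" where
  "nonneg_mat A \<longleftrightarrow> (\<forall>i j. 0 \<le> A $ i $ j)"

definition linear_on_sym :: "(real^'n^'n \<Rightarrow> real^'n^'n) \<Rightarrow> bool" where
  "linear_on_sym L \<longleftrightarrow> L ` sym_mats \<subseteq> sym_mats \<and>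
     (\<forall>X\<in>sym_mats. \<forall>Y\<in>sym_mats. L (X + Y) = L X + L Y) \<and>
     (\<forall>X\<in>sym_mats. \<forall>c::real. L (c *\<^sub>R X) = c *\<^sub>R L X)"

definition standard_map :: "(real^'n^'n \<Rightarrow> real^'n^'n) \<Rightarrow> bool" where
  "standard_map L \<longleftrightarrow> (\<exists>R::real^'n^'n. \<forall>X\<in>sym_mats. L X = R ** X ** transpose R)"

definition lyap :: "real^'n^'n \<Rightarrow> real^'n^'n \<Rightarrow> real^'n^'n \<Rightarrow> real^'n^'n" where
  "lyap A B X = A ** X ** B + transpose B ** X ** transpose A"

end

theory Submission
  imports Defs
begin

text \<open>Both directions rest on the fact that a completely positive matrix is entrywise nonnegative
  and positive semidefinite, so that its 2 x 2 principal minors are nonnegative.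

  If L X = R X R^t preserves CP, then every product (R x)_i (R x)_j with x \<ge> 0 is nonnegative.
  Applied to a combination of two columns of R that carry opposite signs this forces their
  2 x 2 minors to vanish, i.e. the columns to be parallel, contradicting invertibility of R.
  Hence R or -R is nonnegative, and R X R^t = L_{R, R^t/2}(X).

  Conversely, L_{A,B}(x x^t) = u v^t + v u^t with u = A x and v = B^t x, and such a matrix
  is positive semidefinite only if u and v are parallel.  Since B^t is invertible, A x is
  parallel to B^t x for every x \<ge> 0, which forces A = c B^t with c \<ge> 0, and then
  L_{A,B}(X) = 2c B^t X B is standard.\<close>

definition outer_prod :: "real^'n \<Rightarrow> real^'n \<Rightarrow> real^'n^'n" where
  "outer_prod x y = (\<chi> i j. x$i * y$j)"

lemma outer_prod_nth [simp]: "outer_prod x y $ i $ j = x$i * y$j"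
  by (simp add: outer_prod_def)

lemma matrix_mult_outer_prod:
  "A ** outer_prod x y ** B = outer_prod (A *v x) (transpose B *v y)"
  by (simp add: vec_eq_iff matrix_matrix_mult_def matrix_vector_mult_def transpose_def
      sum_distrib_left sum_distrib_right mult_ac)

lemma outer_prod_self_in_sym_mats: "outer_prod x x \<in> sym_mats"
  by (simp add: sym_mats_def transpose_def vec_eq_iff mult.commute)

lemma outer_prod_self_in_cp_cone:
  assumes "\<forall>i. 0 \<le> x$i"
  shows "outer_prod x x \<in> cp_cone"
  unfolding cp_cone_def mem_Collect_eq
  by (rule exI[of _ "Suc 0"], rule exI[of _ "\<lambda>i l. x$i"]) (simp add: assms)

lemma cp_cone_nonneg:
  fixes X :: "real^'n^'n"
  assumes "X \<in> cp_cone"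
  shows "0 \<le> X$i$j"
  using assms unfolding cp_cone_def by (auto intro!: sum_nonneg)

lemma cp_cone_quadratic_form_nonneg:
  fixes X :: "real^'n^'n"
  assumes "X \<in> cp_cone"
  shows "0 \<le> s\<^sup>2 * X$i$i + 2 * s * t * X$i$j + t\<^sup>2 * X$j$j"
proof -
  obtain k and B :: "'n \<Rightarrow> nat \<Rightarrow> real" where X: "\<forall>i j. X$i$j = (\<Sum>l<k. B i l * B j l)"
    using assms unfolding cp_cone_def by blast
  have "s\<^sup>2 * X$i$i + 2 * s * t * X$i$j + t\<^sup>2 * X$j$j = (\<Sum>l<k. (s * B i l + t * B j l)\<^sup>2)"
    by (simp add: X sum_distrib_left sum.distrib[symmetric] power2_eq_square algebra_simps)
  then show ?thesis
    by (simp add: sum_nonneg)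
qed

text \<open>For s = -(b + d) and t = a + c the vector s (a, c) + t (b, d) has coordinate
  product -(ad - bc)^2.\<close>

lemma minor_eq_0_if_pencil_product_nonneg:
  fixes a b c d :: real
  assumes "0 \<le> (-(b + d) * a + (a + c) * b) * (-(b + d) * c + (a + c) * d)"
  shows "a * d = b * c"
proof -
  have "(-(b + d) * a + (a + c) * b) * (-(b + d) * c + (a + c) * d) = - (a * d - b * c)\<^sup>2"
    by (simp add: power2_eq_square algebra_simps)
  then show ?thesis
    using assms by simp
qed

lemma parallel_if_minors_eq_0:
  fixes u v :: "real^'n"
  assumes "\<forall>i j. u$i * v$j = u$j * v$i" and "v \<noteq> 0"
  shows "\<exists>c. u = c *\<^sub>R v"
proof -
  obtain i where i: "v$i \<noteq> 0"
    using assms(2) by (metis vec_eq_iff zero_index)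
  have "u = (u$i / v$i) *\<^sub>R v"
    using assms(1) i by (simp add: vec_eq_iff field_simps)
  then show ?thesis ..
qed

lemma invertible_mult_vec_eq_0:
  fixes C :: "real^'n^'n"
  assumes "invertible C" and "C *v x = 0"
  shows "x = 0"
  using assms matrix_left_invertible_ker invertible_left_inverse by blast

lemma matrix_vector_mult_axis_nth:
  fixes C :: "real^'n^'m"
  shows "(C *v axis k 1) $ i = C$i$k"
  by (simp add: matrix_vector_mult_basis column_def)

lemma axis_nonneg: "\<forall>i. 0 \<le> (axis k 1 :: real^'n)$i"
  by (simp add: axis_def)

lemma axis_add_axis_nonneg: "\<forall>i. 0 \<le> (axis k 1 + axis l 1 :: real^'n)$i"
  by (simp add: axis_def)

lemma lyap_scaleR_transpose:
  "lyap (a *\<^sub>R R) (b *\<^sub>R transpose R) X = (2 * a * b) *\<^sub>R (R ** X ** transpose R)"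
proof -
  have "lyap (a *\<^sub>R R) (b *\<^sub>R transpose R) X
      = (a * b) *\<^sub>R (R ** X ** transpose R) + (b * a) *\<^sub>R (R ** X ** transpose R)"
    by (simp add: lyap_def transpose_scalar matrix_scalar_ac scalar_matrix_assoc[symmetric])
  then show ?thesis
    by (simp add: scaleR_add_left[symmetric])
qed

lemma lyap_outer_prod:
  "lyap A B (outer_prod x x) = outer_prod (A *v x) (transpose B *v x) + outer_prod (transpose B *v x) (A *v x)"
  unfolding lyap_def matrix_mult_outer_prod by simp

lemma standard_map_matrix_invertible:
  fixes L :: "real^'n^'n \<Rightarrow> real^'n^'n"
  assumes "bij_betw L sym_mats sym_mats"
    and "\<forall>X\<in>sym_mats. L X = R ** X ** transpose R"
  shows "invertible R"
proof -
  have "mat 1 \<in> sym_mats"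
    by (simp add: sym_mats_def transpose_mat)
  then obtain X where "X \<in> sym_mats" "L X = mat 1"
    using assms(1) unfolding bij_betw_def by (metis imageE)
  then have "R ** (X ** transpose R) = mat 1"
    using assms(2) by (simp add: matrix_mul_assoc)
  then show ?thesis
    using invertible_right_inverse by blast
qed

lemma nonneg_or_nonpos_if_products_nonneg:
  fixes R :: "real^'n^'n"
  assumes R: "invertible R"
    and prod: "\<And>x i j. \<forall>m. 0 \<le> x$m \<Longrightarrow> 0 \<le> (R *v x)$i * (R *v x)$j"
  shows "nonneg_mat R \<or> nonneg_mat (- R)"
proof (rule ccontr)
  assume "\<not> ?thesis"
  then obtain i k j l where ik: "0 < R$i$k" and jl: "R$j$l < 0"
    by (auto simp: nonneg_mat_def not_le)
  have col_k: "0 \<le> R$m$k" for m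
    using prod[OF axis_nonneg, of k i m] ik by (simp add: matrix_vector_mult_axis_nth zero_le_mult_iff)
  have col_l: "R$m$l \<le> 0" for m
    using prod[OF axis_nonneg, of l j m] jl by (simp add: matrix_vector_mult_axis_nth zero_le_mult_iff)
  have "k \<noteq> l"
    using col_k[of j] jl by auto
  have minors: "R$p$k * R$q$l = R$p$l * R$q$k" for p q
  proof (rule minor_eq_0_if_pencil_product_nonneg)
    let ?x = "(-(R$p$l + R$q$l)) *\<^sub>R axis k 1 + (R$p$k + R$q$k) *\<^sub>R (axis l 1 :: real^'n)"
    have "\<forall>m. 0 \<le> ?x$m"
      using col_k[of p] col_k[of q] col_l[of p] col_l[of q] \<open>k \<noteq> l\<close> by (simp add: axis_def)
    from prod[OF this, of p q]
    show "0 \<le> (-(R$p$l + R$q$l) * R$p$k + (R$p$k + R$q$k) * R$p$l)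
            * (-(R$p$l + R$q$l) * R$q$k + (R$p$k + R$q$k) * R$q$l)"
      by (simp add: algebra_simps matrix_vector_mult_axis_nth)
  qed
  then have "\<forall>p q. column k R $ p * column l R $ q = column k R $ q * column l R $ p"
    unfolding column_def vec_lambda_beta using minors by (metis mult.commute)
  moreover have "column l R \<noteq> 0"
    using jl by (auto simp: column_def vec_eq_iff intro!: exI[of _ j])
  ultimately obtain c where "column k R = c *\<^sub>R column l R"
    using parallel_if_minors_eq_0 by blast
  then have "R *v (axis k 1 - c *\<^sub>R axis l 1) = 0"
    by (simp add: matrix_vector_mult_basis matrix_vector_mult_diff_distrib
        matrix_vector_mult_scaleR)
  then have "axis k 1 - c *\<^sub>R axis l 1 = (0 :: real^'n)"
    using invertible_mult_vec_eq_0[OF R] by blast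
  then show False
    using \<open>k \<noteq> l\<close> by (auto simp: vec_eq_iff axis_def dest: spec[of _ k])
qed

lemma standard_map_cp_preserving_nonneg:
  fixes L :: "real^'n^'n \<Rightarrow> real^'n^'n"
  assumes bij: "bij_betw L sym_mats sym_mats"
    and cp: "L ` cp_cone \<subseteq> cp_cone"
    and LR: "\<forall>X\<in>sym_mats. L X = R ** X ** transpose R"
  shows "\<exists>R'. nonneg_mat R' \<and> (\<forall>X\<in>sym_mats. L X = R' ** X ** transpose R')"
proof -
  have "0 \<le> (R *v x)$i * (R *v x)$j" if "\<forall>m. 0 \<le> x$m" for x i j
  proof -
    have "L (outer_prod x x) \<in> cp_cone"
      using cp outer_prod_self_in_cp_cone[OF that] by blast
    moreover have "L (outer_prod x x) = R ** outer_prod x x ** transpose R"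
      using LR outer_prod_self_in_sym_mats by blast
    ultimately have "outer_prod (R *v x) (R *v x) \<in> cp_cone"
      by (simp add: matrix_mult_outer_prod)
    from cp_cone_nonneg[OF this] show ?thesis
      by simp
  qed
  then consider "nonneg_mat R" | "nonneg_mat (- R)"
    using nonneg_or_nonpos_if_products_nonneg standard_map_matrix_invertible[OF bij LR] by blast
  then show ?thesis
  proof cases
    case 1
    then show ?thesis
      using LR by blast
  next
    case 2
    moreover have "(- R) ** X ** transpose (- R) = R ** X ** transpose R" for X
      by (simp add: transpose_def matrix_matrix_mult_def vec_eq_iff sum_negf)
    ultimately show ?thesis
      using LR by auto
  qed
qed

lemma congruence_eq_lyap: "R ** X ** transpose R = lyap R ((1/2) *\<^sub>R transpose R) X"
  using lyap_scaleR_transpose[of 1 R "1/2" X] by simp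

lemma cp_cone_symmetrized_outer_prod_parallel:
  assumes "outer_prod u v + outer_prod v u \<in> cp_cone" and "v \<noteq> 0"
  shows "\<exists>c. u = c *\<^sub>R v"
proof (rule parallel_if_minors_eq_0[OF _ assms(2)], intro allI)
  fix i j
  let ?s = "-(u$j + v$j)" and ?t = "u$i + v$i"
  let ?X = "outer_prod u v + outer_prod v u"
  have "?s\<^sup>2 * ?X$i$i + 2 * ?s * ?t * ?X$i$j + ?t\<^sup>2 * ?X$j$j
      = 2 * ((?s * u$i + ?t * u$j) * (?s * v$i + ?t * v$j))"
    by (simp add: power2_eq_square algebra_simps)
  then have "0 \<le> (?s * u$i + ?t * u$j) * (?s * v$i + ?t * v$j)"
    using cp_cone_quadratic_form_nonneg[OF assms(1), of ?s i ?t j] by linarith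
  then show "u$i * v$j = u$j * v$i"
    by (rule minor_eq_0_if_pencil_product_nonneg)
qed

lemma scalar_multiple_if_parallel_on_nonneg:
  fixes A C :: "real^'n^'n"
  assumes C: "invertible C"
    and par: "\<And>x. \<forall>i. 0 \<le> x$i \<Longrightarrow> x \<noteq> 0 \<Longrightarrow> \<exists>c. A *v x = c *\<^sub>R (C *v x)"
  shows "\<exists>c. A = c *\<^sub>R C"
proof -
  have axis_nonzero: "(axis k 1 :: real^'n) \<noteq> 0" for k
    by (simp add: axis_def vec_eq_iff)
  have "\<forall>k. \<exists>c. A *v axis k 1 = c *\<^sub>R (C *v axis k 1)"
    using par[OF axis_nonneg axis_nonzero] by blast
  then obtain lam where lam: "\<And>k. A *v axis k 1 = lam k *\<^sub>R (C *v axis k 1)"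
    by metis
  have lam_const: "lam k = lam l" for k l
  proof (cases "k = l")
    case False
    have "(axis k 1 + axis l 1 :: real^'n) $ k = 1"
      using False by (simp add: axis_def)
    then have "(axis k 1 + axis l 1 :: real^'n) \<noteq> 0"
      by (metis zero_index zero_neq_one)
    then obtain mu where mu: "A *v (axis k 1 + axis l 1) = mu *\<^sub>R (C *v (axis k 1 + axis l 1))"
      using par[OF axis_add_axis_nonneg] by blast
    define v where "v = (lam k - mu) *\<^sub>R axis k 1 + (lam l - mu) *\<^sub>R (axis l 1 :: real^'n)"
    have "C *v v = lam k *\<^sub>R (C *v axis k 1) + lam l *\<^sub>R (C *v axis l 1)
        - mu *\<^sub>R (C *v (axis k 1 + axis l 1))"
      by (simp add: v_def algebra_simps)
    also have "\<dots> = 0"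
      using mu lam[of k] lam[of l] by (simp add: algebra_simps)
    finally have "v = 0"
      using invertible_mult_vec_eq_0[OF C] by blast
    then have "v $ k = 0" "v $ l = 0"
      by simp_all
    then show ?thesis
      using False by (simp add: v_def axis_def)
  qed simp
  have "A = lam l *\<^sub>R C" for l
  proof -
    have "A $ i $ k = (lam l *\<^sub>R C) $ i $ k" for i k
      using arg_cong[OF lam[of k], of "\<lambda>y. y $ i"] lam_const[of k l]
      by (simp add: matrix_vector_mult_axis_nth)
    then show ?thesis
      by (simp add: vec_eq_iff)
  qed
  then show ?thesis
    by blast
qed

lemma lyap_cp_preserving_eq_nonneg_multiple_transpose:
  fixes L :: "real^'n^'n \<Rightarrow> real^'n^'n" and A B :: "real^'n^'n"
  assumes cp: "L ` cp_cone \<subseteq> cp_cone"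
    and B: "invertible B"
    and LX: "\<forall>X\<in>sym_mats. L X = lyap A B X"
  shows "\<exists>c \<ge> 0. A = c *\<^sub>R transpose B"
proof -
  have lyap_cp: "lyap A B (outer_prod x x) \<in> cp_cone" if "\<forall>i. 0 \<le> x$i" for x
  proof -
    have "L (outer_prod x x) \<in> cp_cone"
      using cp outer_prod_self_in_cp_cone[OF that] by blast
    then show ?thesis
      using LX outer_prod_self_in_sym_mats by metis
  qed
  have Bt: "invertible (transpose B)"
    using B by (rule transpose_invertible)
  have "\<exists>c. A = c *\<^sub>R transpose B"
  proof (rule scalar_multiple_if_parallel_on_nonneg[OF Bt])
    fix x :: "real^'n"
    assume x: "\<forall>i. 0 \<le> x$i" and "x \<noteq> 0"
    then have "transpose B *v x \<noteq> 0"
      using invertible_mult_vec_eq_0[OF Bt] by blast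
    then show "\<exists>c. A *v x = c *\<^sub>R (transpose B *v x)"
      using cp_cone_symmetrized_outer_prod_parallel lyap_cp[OF x, unfolded lyap_outer_prod] by blast
  qed
  then obtain c where Ac: "A = c *\<^sub>R transpose B" ..
  have "transpose B *v 1 \<noteq> 0"
    using invertible_mult_vec_eq_0[OF Bt] by (metis one_index vec_eq_iff zero_index zero_neq_one)
  then obtain i where i: "(transpose B *v 1) $ i \<noteq> 0"
    by (metis vec_eq_iff zero_index)
  have "0 \<le> lyap A B (outer_prod 1 1) $ i $ i"
    by (rule cp_cone_nonneg[OF lyap_cp]) simp
  also have "\<dots> = 2 * c * ((transpose B *v 1) $ i)\<^sup>2"
    by (simp add: lyap_outer_prod Ac scaleR_matrix_vector_assoc[symmetric] power2_eq_square)
  finally have "0 \<le> c"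
    using i by (simp add: zero_le_mult_iff)
  with Ac show ?thesis
    by blast
qed

lemma lyap_cp_preserving_imp_standard_map:
  fixes L :: "real^'n^'n \<Rightarrow> real^'n^'n" and A B :: "real^'n^'n"
  assumes "L ` cp_cone \<subseteq> cp_cone"
    and "invertible B"
    and LX: "\<forall>X\<in>sym_mats. L X = lyap A B X"
  shows "standard_map L"
proof -
  obtain c where "0 \<le> c" and Ac: "A = c *\<^sub>R transpose B"
    using lyap_cp_preserving_eq_nonneg_multiple_transpose[OF assms] by blast
  have "L X = (sqrt (2 * c) *\<^sub>R transpose B) ** X ** transpose (sqrt (2 * c) *\<^sub>R transpose B)"
    if "X \<in> sym_mats" for X
  proof -
    have "L X = (2 * c) *\<^sub>R (transpose B ** X ** B)"
      using LX that lyap_scaleR_transpose[of c "transpose B" 1 X] by (simp add: Ac)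
    with \<open>0 \<le> c\<close> show ?thesis
      by (simp add: transpose_scalar matrix_scalar_ac scalar_matrix_assoc[symmetric])
  qed
  then show ?thesis
    unfolding standard_map_def by blast
qed

theorem mainTheorem4:
  fixes L :: "real^'n^'n \<Rightarrow> real^'n^'n"
  assumes "linear_on_sym L"
    and "bij_betw L sym_mats sym_mats"
    and "L ` cp_cone \<subseteq> cp_cone"
  shows "(standard_map L \<longrightarrow>
           (\<exists>A B. nonneg_mat A \<and> nonneg_mat B \<and> (\<forall>X\<in>sym_mats. L X = lyap A B X)))
       \<and> (CARD('n) \<le> 4 \<longrightarrow>
           (\<forall>A B. invertible B \<and> (\<forall>X\<in>sym_mats. L X = lyap A B X) \<longrightarrow> standard_map L))"
proof (intro conjI impI allI)
  assume "standard_map L"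
  then obtain R where "\<forall>X\<in>sym_mats. L X = R ** X ** transpose R"
    unfolding standard_map_def by blast
  then obtain R where R: "nonneg_mat R" and LR: "\<forall>X\<in>sym_mats. L X = R ** X ** transpose R"
    using standard_map_cp_preserving_nonneg[OF assms(2,3)] by blast
  have "nonneg_mat ((1/2) *\<^sub>R transpose R)"
    using R by (simp add: nonneg_mat_def transpose_def)
  with R LR show "\<exists>A B. nonneg_mat A \<and> nonneg_mat B \<and> (\<forall>X\<in>sym_mats. L X = lyap A B X)"
    by (auto simp: congruence_eq_lyap)
next
  fix A B :: "real^'n^'n"
  assume "invertible B \<and> (\<forall>X\<in>sym_mats. L X = lyap A B X)"
  then show "standard_map L"
    using lyap_cp_preserving_imp_standard_map[OF assms(3)] by blast
qed

end
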